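(* Let $k\in\mathbb N$, $n=2^k$, and let $G=\mathrm{Cay}(\mathbb Z_n,S)$ be an integral circulant graph with $S=\frac n2-S$ and $|S\cap S_n(d)|\equiv0\pmod4$ for every proper divisor $d$ of $n$. Then for each $x\in\mathbb Z_n$, the graph obtained from $G$ by adding a new edge (of weight $1$) between the twin vertices $x$ and $x+\frac n2$ exhibits Laplacian perfect state transfer between $x$ and $x+\frac n2$ at time $\frac\pi2$, and it is periodic at every remaining vertex at time $\frac\pi2$.
   Context: $\mathrm{Cay}(\mathbb Z_n,S)$ ($0\notin S$, $-S=S$) has vertex set $\mathbb Z_n$ with $a\sim b$ iff $a-b\in S$; it is integral if all its adjacency eigenvalues are integers. $\frac n2-S=\{\frac n2-s:s\in S\}$. $S_n(d)=\{x\in\mathbb Z_n:\gcd(x,n)=d\}$. Twin vertices $u\ne v$: $N(u)\setminus\{v\}=N(v)\setminus\{u\}$. For a graph with Laplacian $L=D-A$, $U_L(t)=\exp(-itL)$; Laplacian perfect state transfer between distinct $u,v$ at time $\tau$ means $U_L(\tau)\mathbf e_u=\gamma\mathbf e_v$ for some $\gamma\in\mathbb C$; periodic at $w$ at time $\tau\ne0$ means $U_L(\tau)\mathbf e_w=\gamma\mathbf e_w$ for some $\gamma\in\mathbb C$. *)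

theory Defs
  imports Complex_Main
begin

text \<open>Square matrices of size n are represented as functions nat => nat => complex,
  with indices in {0..<n}; vertices of Z_n are 0..n-1.\<close>

definition mat_mult :: "nat \<Rightarrow> (nat \<Rightarrow> nat \<Rightarrow> complex) \<Rightarrow> (nat \<Rightarrow> nat \<Rightarrow> complex) \<Rightarrow> nat \<Rightarrow> nat \<Rightarrow> complex" where
  "mat_mult n A B = (\<lambda>u v. \<Sum>w<n. A u w * B w v)"

fun mat_pow :: "nat \<Rightarrow> (nat \<Rightarrow> nat \<Rightarrow> complex) \<Rightarrow> nat \<Rightarrow> nat \<Rightarrow> nat \<Rightarrow> complex" where
  "mat_pow n A 0 = (\<lambda>u v. if u = v then 1 else 0)"
| "mat_pow n A (Suc m) = mat_mult n (mat_pow n A m) A"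

definition mat_exp :: "nat \<Rightarrow> (nat \<Rightarrow> nat \<Rightarrow> complex) \<Rightarrow> nat \<Rightarrow> nat \<Rightarrow> complex" where
  "mat_exp n M = (\<lambda>u v. \<Sum>m. mat_pow n M m u v / of_nat (fact m))"

definition laplacian :: "nat \<Rightarrow> (nat \<Rightarrow> nat \<Rightarrow> complex) \<Rightarrow> nat \<Rightarrow> nat \<Rightarrow> complex" where
  "laplacian n A = (\<lambda>u v. (if u = v then (\<Sum>w<n. A u w) else 0) - A u v)"

definition U_L :: "nat \<Rightarrow> (nat \<Rightarrow> nat \<Rightarrow> complex) \<Rightarrow> real \<Rightarrow> nat \<Rightarrow> nat \<Rightarrow> complex" where
  "U_L n A t = mat_exp n (\<lambda>u v. - (\<i> * of_real t) * laplacian n A u v)"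

definition lap_PST :: "nat \<Rightarrow> (nat \<Rightarrow> nat \<Rightarrow> complex) \<Rightarrow> nat \<Rightarrow> nat \<Rightarrow> real \<Rightarrow> bool" where
  "lap_PST n A u v \<tau> \<longleftrightarrow> u < n \<and> v < n \<and> u \<noteq> v \<and>
     (\<exists>\<gamma>::complex. \<forall>w<n. U_L n A \<tau> w u = \<gamma> * (if w = v then 1 else 0))"

definition lap_periodic :: "nat \<Rightarrow> (nat \<Rightarrow> nat \<Rightarrow> complex) \<Rightarrow> nat \<Rightarrow> real \<Rightarrow> bool" where
  "lap_periodic n A w \<tau> \<longleftrightarrow> w < n \<and> \<tau> \<noteq> 0 \<and>
     (\<exists>\<gamma>::complex. \<forall>w'<n. U_L n A \<tau> w' w = \<gamma> * (if w' = w then 1 else 0))"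

definition cay_adj :: "nat \<Rightarrow> nat set \<Rightarrow> nat \<Rightarrow> nat \<Rightarrow> bool" where
  "cay_adj n S a b \<longleftrightarrow> (a + n - b) mod n \<in> S"

definition cay_adjmat :: "nat \<Rightarrow> nat set \<Rightarrow> nat \<Rightarrow> nat \<Rightarrow> complex" where
  "cay_adjmat n S = (\<lambda>a b. if cay_adj n S a b then 1 else 0)"

definition conn_set :: "nat \<Rightarrow> nat set \<Rightarrow> bool" where
  "conn_set n S \<longleftrightarrow> S \<subseteq> {0..<n} \<and> 0 \<notin> S \<and> (\<forall>s\<in>S. (n - s) mod n \<in> S)"

definition is_eigenvalue :: "nat \<Rightarrow> (nat \<Rightarrow> nat \<Rightarrow> complex) \<Rightarrow> complex \<Rightarrow> bool" where
  "is_eigenvalue n A c \<longleftrightarrow> (\<exists>x::nat \<Rightarrow> complex. (\<exists>w<n. x w \<noteq> 0) \<and>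
      (\<forall>u<n. (\<Sum>w<n. A u w * x w) = c * x u))"

definition integral_graph :: "nat \<Rightarrow> (nat \<Rightarrow> nat \<Rightarrow> complex) \<Rightarrow> bool" where
  "integral_graph n A \<longleftrightarrow> (\<forall>c. is_eigenvalue n A c \<longrightarrow> c \<in> \<int>)"

definition half_minus :: "nat \<Rightarrow> nat set \<Rightarrow> nat set" where
  "half_minus n S = (\<lambda>s. (n div 2 + n - s) mod n) ` S"

definition S_n :: "nat \<Rightarrow> nat \<Rightarrow> nat set" where
  "S_n n d = {x. x < n \<and> gcd x n = d}"

definition twins :: "nat \<Rightarrow> (nat \<Rightarrow> nat \<Rightarrow> bool) \<Rightarrow> nat \<Rightarrow> nat \<Rightarrow> bool" where
  "twins n adj u v \<longleftrightarrow> u \<noteq> v \<and>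
     {w. w < n \<and> adj u w} - {v} = {w. w < n \<and> adj v w} - {u}"

definition add_edge :: "(nat \<Rightarrow> nat \<Rightarrow> complex) \<Rightarrow> nat \<Rightarrow> nat \<Rightarrow> nat \<Rightarrow> nat \<Rightarrow> complex" where
  "add_edge A x y = (\<lambda>u v. A u v + (if (u = x \<and> v = y) \<or> (u = y \<and> v = x) then 1 else 0))"

end

theory Submission
  imports Defs "HOL-Computational_Algebra.Computational_Algebra" "HOL-Library.Numeral_Type"
begin

text \<open>
  Since S = -S = n/2 - S, the set S is invariant under s \<mapsto> s + n/2, so x and y = x + n/2 have
  the same neighbours. The characters w \<mapsto> \<omega>^(j w) are eigenvectors of the circulant adjacency
  matrix with eigenvalues \<lambda>_j = \<Sum>_(s \<in> S) \<omega>^(j s). If \<omega>^j has order 2N with N = 2^b, then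
  X^N + 1 is its minimal polynomial (Eisenstein after X \<mapsto> X + 1), so an integral \<lambda>_j equals the
  number of s \<in> S divisible by 2N minus the number of the remaining multiples of N; the hypothesis
  on the classes S_n(d) makes this divisible by 4, as is |S|. Hence every Laplacian eigenvalue of G
  is divisible by 4. The extra edge adds (e_x - e_y)(e_x - e_y)^T to the Laplacian; for twins this
  only raises the eigenvalue of e_x - e_y from |S| to |S| + 2, so
  U_L(\<pi>/2) = I - (e_x - e_y)(e_x - e_y)^T, which exchanges x and y and fixes every other vertex.
\<close>

section \<open>Irreducibility of X^(2^b) + 1 over the integers\<close>

lemma even_binomial_pow2:
  assumes "0 < i" "i < 2 ^ b"
  shows "even (2 ^ b choose i)"
proof -
  have "([:1, 1:] :: 2 poly) ^ 2 ^ b = ([:0, 1:] + 1) ^ 2 ^ b"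
    by (simp add: one_pCons)
  also have "\<dots> = [:0, 1:] ^ 2 ^ b + 1"
    by (subst freshmans_dream'[where n = b]) simp_all
  finally have "coeff ([:1, 1:] ^ 2 ^ b :: 2 poly) i = coeff ([:0, 1:] ^ 2 ^ b + 1) i"
    by (rule arg_cong)
  hence "of_nat (2 ^ b choose i) = (0 :: 2)"
    using assms by (simp add: coeff_linear_poly_power power_0_left)
  thus ?thesis
    by (simp add: of_nat_eq_0_iff_char_dvd)
qed

lemma eisenstein_criterion:
  fixes G A B :: "int poly" and p :: int
  assumes p: "prime p" and "G = A * B" and "degree A > 0" and "degree B > 0"
    and dvd_coeff: "\<And>i. i < degree G \<Longrightarrow> p dvd coeff G i"
    and not_dvd_0: "\<not> p\<^sup>2 dvd coeff G 0" and not_dvd_lead: "\<not> p dvd lead_coeff G"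
  shows False
proof -
  have coeff_0: "coeff G 0 = coeff A' 0 * coeff B' 0" if "G = A' * B'" for A' B'
    using that by (simp add: coeff_mult)
  have no_factor: "\<not> p dvd coeff A' 0" if GAB: "G = A' * B'" and dB: "degree B' > 0" for A' B'
  proof
    assume pA: "p dvd coeff A' 0"
    have "G \<noteq> 0"
      using not_dvd_lead by auto
    hence deg: "degree G = degree A' + degree B'"
      using GAB by (simp add: degree_mult_eq)
    have pB: "\<not> p dvd coeff B' 0"
      using pA not_dvd_0 coeff_0[OF GAB] by (auto simp: power2_eq_square)
    have "\<not> p dvd lead_coeff A'"
      using not_dvd_lead GAB by (auto simp: lead_coeff_mult)
    define t where "t = (LEAST i. \<not> p dvd coeff A' i)"
    have pt: "\<not> p dvd coeff A' t"
      using \<open>\<not> p dvd lead_coeff A'\<close> unfolding t_def by (rule LeastI)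
    have t_le: "t \<le> degree A'"
      using \<open>\<not> p dvd lead_coeff A'\<close> unfolding t_def by (rule Least_le)
    have below_t: "p dvd coeff A' i" if "i < t" for i
      using that not_less_Least unfolding t_def by blast
    have "coeff G t = (\<Sum>i<t. coeff A' i * coeff B' (t - i)) + coeff A' t * coeff B' 0"
      using GAB by (simp add: coeff_mult lessThan_Suc_atMost[symmetric])
    moreover have "p dvd (\<Sum>i<t. coeff A' i * coeff B' (t - i))"
      by (intro dvd_sum) (simp add: below_t)
    moreover have "\<not> p dvd coeff A' t * coeff B' 0"
      using p pt pB by (simp add: prime_dvd_mult_iff)
    moreover have "p dvd coeff G t"
      using dvd_coeff t_le deg dB by simp
    ultimately show False
      by (simp add: dvd_add_right_iff)
  qed
  have "degree G > 0"
    using assms(2-4) by (metis add_gr_0 degree_0 degree_mult_eq less_irrefl)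
  hence "p dvd coeff A 0 * coeff B 0"
    using dvd_coeff[of 0] coeff_0[OF assms(2)] by simp
  thus False
    using p no_factor[of A B] no_factor[of B A] assms(2-4) by (auto simp: prime_dvd_mult_iff mult.commute)
qed

lemma pcompose_x_power: "pcompose ([:0, 1:] ^ n) q = q ^ n"
  by (induction n) (simp_all add: pcompose_pCons pcompose_1)

lemma irreducible_x_pow2_plus_1: "irreducible ([:0, 1:] ^ 2 ^ b + 1 :: int poly)"
proof -
  define N :: nat where "N = 2 ^ b"
  define g :: "int poly" where "g = [:0, 1:] ^ N + 1"
  have "N > 0"
    unfolding N_def by simp
  hence deg_g: "degree g = N"
    unfolding g_def by (simp add: degree_add_eq_left degree_power_eq)
  have "lead_coeff g = 1"
    unfolding deg_g using \<open>N > 0\<close> by (simp add: g_def coeff_linear_poly_power)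
  define G where "G = pcompose g [:1, 1:]"
  have deg_G: "degree G = N"
    unfolding G_def by (simp add: degree_pcompose deg_g)
  have coeff_G: "coeff G i = int (N choose i) + (if i = 0 then 1 else 0)" for i
    unfolding G_def g_def
    by (cases "i \<le> N") (simp_all add: pcompose_add pcompose_1 pcompose_x_power coeff_linear_poly_power binomial_eq_0 coeff_eq_0 degree_linear_power)
  have no_proper_factor: False if "g = q * r" "degree q > 0" "degree r > 0" for q r
  proof (rule eisenstein_criterion[of 2 G "pcompose q [:1, 1:]" "pcompose r [:1, 1:]"])
    show "G = pcompose q [:1, 1:] * pcompose r [:1, 1:]"
      unfolding G_def that(1) by (rule pcompose_mult)
    show "degree (pcompose q [:1, 1:]) > 0" "degree (pcompose r [:1, 1:]) > 0"
      using that(2,3) by (simp_all add: degree_pcompose)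
    show "2 dvd coeff G i" if "i < degree G" for i
      using that even_binomial_pow2[of i b] deg_G unfolding coeff_G N_def by (cases "i = 0") auto
    show "\<not> 2\<^sup>2 dvd coeff G 0" "\<not> 2 dvd lead_coeff G"
      unfolding deg_G coeff_G using \<open>N > 0\<close> by simp_all
  qed simp
  show ?thesis
    unfolding N_def[symmetric] g_def[symmetric]
  proof (rule irreducibleI)
    show "g \<noteq> 0" "\<not> is_unit g"
      using deg_g \<open>N > 0\<close> by (auto simp: is_unit_poly_iff)
    show "is_unit q \<or> is_unit r" if "g = q * r" for q r
    proof -
      have "degree q = 0 \<or> degree r = 0"
        using no_proper_factor[OF that] by auto
      moreover have "lead_coeff q * lead_coeff r = 1"
        using \<open>lead_coeff g = 1\<close> that by (simp add: lead_coeff_mult)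
      ultimately show ?thesis
        by (metis degree_eq_zeroE dvd_triv_left dvd_triv_right is_unit_const_poly_iff lead_coeff_pCons(2))
    qed
  qed
qed

lemma map_poly_of_int_add:
  "map_poly (of_int :: int \<Rightarrow> 'a::comm_ring_1) (p + q) = map_poly of_int p + map_poly of_int q"
  by (rule poly_eqI) (simp add: coeff_map_poly)

lemma map_poly_of_int_mult:
  "map_poly (of_int :: int \<Rightarrow> 'a::comm_ring_1) (p * q) = map_poly of_int p * map_poly of_int q"
  by (rule poly_eqI) (simp add: coeff_map_poly coeff_mult of_int_sum)

lemma prime_poly_degree_le_common_root:
  fixes g Q :: "int poly" and z :: "'a :: {idom, ring_char_0}"
  assumes g: "prime_elem g" "poly (map_poly of_int g) z = 0"
    and "Q \<noteq> 0" "poly (map_poly of_int Q) z = 0"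
  shows "degree g \<le> degree Q"
  using assms(3,4)
proof (induction "degree Q" arbitrary: Q rule: less_induct)
  case less
  obtain q r where qr: "pseudo_divmod g Q = (q, r)"
    by (cases "pseudo_divmod g Q")
  define c where "c = lead_coeff Q ^ (Suc (degree g) - degree Q)"
  have "c \<noteq> 0"
    using less.prems(1) by (simp add: c_def)
  have div: "smult c g = Q * q + r" and "r = 0 \<or> degree r < degree Q"
    using pseudo_divmod[OF less.prems(1) qr] by (simp_all add: c_def)
  have "poly (map_poly of_int r) z = 0"
    using arg_cong[OF div, of "\<lambda>p. poly (map_poly of_int p) z"] g(2) less.prems(2)
    by (simp add: map_poly_of_int_add map_poly_of_int_mult map_poly_smult)
  show ?case
  proof (cases "r = 0")
    case False
    thus ?thesis
      using less.hyps[of r] \<open>poly (map_poly of_int r) z = 0\<close> \<open>r = 0 \<or> degree r < degree Q\<close> by simp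
  next
    case True
    hence "g dvd Q * q"
      using div by (metis add_0_right dvd_refl dvd_smult)
    hence "g dvd Q \<or> g dvd q"
      using g(1) by (simp add: prime_elem_dvd_mult_iff)
    thus ?thesis
    proof
      assume "g dvd Q"
      thus ?thesis
        using less.prems(1) by (rule dvd_imp_degree_le)
    next
      assume "g dvd q"
      then obtain t where "q = g * t" ..
      hence "g * [:c:] = g * (Q * t)"
        using div True by (simp add: algebra_simps)
      hence "[:c:] = Q * t"
        using g(1) by (metis mult_left_cancel prime_elem_def)
      hence "degree Q = 0"
        using \<open>c \<noteq> 0\<close> by (metis add_eq_0_iff_both_eq_0 degree_mult_eq degree_pCons_0 mult_zero_right pCons_eq_0_iff)
      then obtain a where "Q = [:a:]"
        by (rule degree_eq_zeroE)
      thus ?thesis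
        using less.prems by (simp add: map_poly_pCons)
    qed
  qed
qed

section \<open>Integral sums of powers of a root of -1\<close>

lemma exists_pow2_eq_minus_1:
  fixes z :: "'a :: idom"
  assumes "z ^ 2 ^ k = 1" and "z \<noteq> 1"
  shows "\<exists>b<k. z ^ 2 ^ b = -1"
  using assms(1)
proof (induction k)
  case 0
  thus ?case
    using assms(2) by simp
next
  case (Suc k)
  have "(z ^ 2 ^ k)\<^sup>2 = 1"
    using Suc.prems by (simp add: power_mult[symmetric] mult.commute)
  hence "z ^ 2 ^ k = 1 \<or> z ^ 2 ^ k = -1"
    by (simp add: power2_eq_1_iff)
  thus ?case
    using Suc.IH less_Suc_eq by blast
qed

lemma int_combination_root_pow2_eq_int:
  fixes z :: complex and c :: "nat \<Rightarrow> int" and L :: int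
  assumes z: "z ^ 2 ^ b = -1" and sum_eq: "(\<Sum>r<2 ^ b. of_int (c r) * z ^ r) = of_int L"
  shows "c 0 = L"
proof -
  define N :: nat where "N = 2 ^ b"
  define Q :: "int poly" where "Q = (\<Sum>r<N. monom (c r) r) - [:L:]"
  have "N > 0"
    by (simp add: N_def)
  have coeff_Q: "coeff Q i = (if i < N then c i else 0) - (if i = 0 then L else 0)" for i
    by (simp add: Q_def coeff_sum coeff_monom coeff_pCons split: nat.split)
  have "(map_poly of_int Q :: complex poly) = (\<Sum>r<N. monom (of_int (c r)) r) - [:of_int L:]"
    by (rule poly_eqI) (simp add: coeff_map_poly coeff_Q coeff_sum coeff_monom coeff_pCons split: nat.split)
  hence "poly (map_poly of_int Q) z = 0"
    using sum_eq by (simp add: poly_sum poly_monom N_def)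
  have "degree Q < N"
    using \<open>N > 0\<close> coeff_Q by (intro degree_lessI) auto
  have "Q = 0"
  proof (rule ccontr)
    assume "Q \<noteq> 0"
    have "prime_elem ([:0, 1:] ^ N + 1 :: int poly)"
      unfolding N_def by (intro irreducible_imp_prime_poly irreducible_x_pow2_plus_1)
    moreover have "poly (map_poly of_int ([:0, 1:] ^ N + 1 :: int poly)) z = 0"
      using z by (simp add: N_def map_poly_of_int_add map_poly_monom poly_monom flip: monom_altdef[of 1, simplified])
    ultimately have "degree ([:0, 1:] ^ N + 1 :: int poly) \<le> degree Q"
      using \<open>Q \<noteq> 0\<close> \<open>poly (map_poly of_int Q) z = 0\<close> by (rule prime_poly_degree_le_common_root)
    thus False
      using \<open>degree Q < N\<close> by (simp add: degree_add_eq_left degree_power_eq)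
  qed
  thus "c 0 = L"
    using coeff_Q[of 0] \<open>N > 0\<close> by simp
qed

lemma sum_powers_of_root_eq_int:
  fixes z :: complex and S :: "nat set" and L :: int
  assumes z: "z ^ 2 ^ b = -1" and "finite S" and sum_eq: "(\<Sum>s\<in>S. z ^ s) = of_int L"
  shows "L = 2 * int (card {s\<in>S. 2 ^ Suc b dvd s}) - int (card {s\<in>S. 2 ^ b dvd s})"
proof -
  \<comment> \<open>Reducing exponents with z^N = -1 writes the sum as an integer combination of 1, z, ..., z^(N-1)
    whose constant coefficient counts the s \<in> S divisible by N with sign (-1)^(s/N).\<close>
  define N :: nat where "N = 2 ^ b"
  define sign :: "nat \<Rightarrow> int" where "sign s = (if even (s div N) then 1 else -1)" for s
  define c :: "nat \<Rightarrow> int" where "c r = (\<Sum>s\<in>{s\<in>S. s mod N = r}. sign s)" for r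
  have "N > 0"
    by (simp add: N_def)
  have z_pow: "z ^ s = of_int (sign s) * z ^ (s mod N)" for s
  proof -
    have "z ^ s = (z ^ N) ^ (s div N) * z ^ (s mod N)"
      by (subst mult_div_mod_eq[of N s, symmetric]) (simp only: power_add power_mult)
    thus ?thesis
      using z by (simp add: N_def sign_def)
  qed
  have "(\<Sum>s\<in>S. z ^ s) = (\<Sum>s\<in>S. of_int (sign s) * z ^ (s mod N))"
    by (intro sum.cong refl z_pow)
  also have "\<dots> = (\<Sum>r<N. \<Sum>s\<in>{s\<in>S. s mod N = r}. of_int (sign s) * z ^ (s mod N))"
    using \<open>finite S\<close> \<open>N > 0\<close> by (intro sum.group[symmetric]) auto
  also have "\<dots> = (\<Sum>r<N. of_int (c r) * z ^ r)"
    unfolding c_def of_int_sum sum_distrib_right by (intro sum.cong refl) auto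
  finally have "c 0 = L"
    using int_combination_root_pow2_eq_int[OF z] sum_eq by (simp add: N_def)
  moreover have "c 0 = (\<Sum>s\<in>{s\<in>S. N dvd s}. 2 * of_bool (2 * N dvd s) - 1)"
    unfolding c_def sign_def using \<open>N > 0\<close>
    by (intro sum.cong) (auto elim!: dvdE simp: dvd_mod_iff)
  moreover have "{s\<in>S. N dvd s} \<inter> {s. 2 * N dvd s} = {s\<in>S. 2 * N dvd s}"
    by (auto intro: dvd_mult_right)
  ultimately have "L = 2 * int (card {s\<in>S. 2 * N dvd s}) - int (card {s\<in>S. N dvd s})"
    using \<open>finite S\<close> by (simp add: sum_subtractf sum_distrib_left)
  thus ?thesis
    by (simp add: N_def)
qed

section \<open>Matrix exponentials through eigenvectors\<close>

definition mat_vec :: "nat \<Rightarrow> (nat \<Rightarrow> nat \<Rightarrow> complex) \<Rightarrow> (nat \<Rightarrow> complex) \<Rightarrow> nat \<Rightarrow> complex" where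
  "mat_vec n M z = (\<lambda>u. \<Sum>w<n. M u w * z w)"

lemma mat_vec_mat_mult: "mat_vec n (mat_mult n A B) z = mat_vec n A (mat_vec n B z)"
proof
  fix u
  have "mat_vec n (mat_mult n A B) z u = (\<Sum>w<n. \<Sum>v<n. A u v * (B v w * z w))"
    by (simp add: mat_vec_def mat_mult_def sum_distrib_right mult.assoc)
  also have "\<dots> = (\<Sum>v<n. A u v * (\<Sum>w<n. B v w * z w))"
    by (subst sum.swap) (simp add: sum_distrib_left)
  finally show "mat_vec n (mat_mult n A B) z u = mat_vec n A (mat_vec n B z) u"
    by (simp add: mat_vec_def)
qed

lemma mat_vec_unit: "w < n \<Longrightarrow> mat_vec n M (\<lambda>v. if v = w then 1 else 0) u = M u w"
  by (simp add: mat_vec_def if_distrib cong: if_cong)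

lemma mat_vec_lincomb:
  assumes "\<And>v. v < n \<Longrightarrow> z v = (\<Sum>j\<in>J. a j * g j v)"
  shows "mat_vec n M z u = (\<Sum>j\<in>J. a j * mat_vec n M (g j) u)"
proof -
  have "mat_vec n M z u = (\<Sum>w<n. \<Sum>j\<in>J. a j * (M u w * g j w))"
    unfolding mat_vec_def by (intro sum.cong refl) (simp add: assms sum_distrib_left mult_ac)
  thus ?thesis
    by (subst (asm) sum.swap) (simp add: mat_vec_def sum_distrib_left)
qed

lemma mat_vec_mat_pow_eigen:
  assumes eigen: "\<And>v. v < n \<Longrightarrow> mat_vec n M g v = \<nu> * g v" and "u < n"
  shows "mat_vec n (mat_pow n M m) g u = \<nu> ^ m * g u"
  using \<open>u < n\<close>
proof (induction m arbitrary: u)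
  case 0
  have "(\<Sum>w<n. (if u = w then 1 else 0) * g w) = (\<Sum>w<n. if w = u then g u else 0)"
    by (intro sum.cong) auto
  thus ?case
    using 0 by (simp add: mat_vec_def)
next
  case (Suc m)
  have "mat_vec n (mat_pow n M m) (mat_vec n M g) u = mat_vec n (mat_pow n M m) (\<lambda>v. \<nu> * g v) u"
    using eigen by (simp add: mat_vec_def)
  also have "\<dots> = \<nu> * mat_vec n (mat_pow n M m) g u"
    by (simp add: mat_vec_def sum_distrib_left mult.left_commute)
  finally show ?case
    using Suc by (simp add: mat_vec_mat_mult)
qed

lemma mat_exp_eigen_expansion:
  fixes g :: "'j \<Rightarrow> nat \<Rightarrow> complex"
  assumes "finite J"
    and eigen: "\<And>j v. j \<in> J \<Longrightarrow> v < n \<Longrightarrow> mat_vec n M (g j) v = \<nu> j * g j v"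
    and unit: "\<And>v. v < n \<Longrightarrow> (if v = w then 1 else 0) = (\<Sum>j\<in>J. a j * g j v)"
    and "u < n" "w < n"
  shows "mat_exp n M u w = (\<Sum>j\<in>J. a j * exp (\<nu> j) * g j u)"
proof -
  \<comment> \<open>Each entry of \<open>mat_exp\<close> is a series; the expansion of the unit vector makes its terms a
    finite combination of exponential series, which also settles convergence.\<close>
  have pow: "mat_pow n M m u w = (\<Sum>j\<in>J. a j * g j u * \<nu> j ^ m)" for m
  proof -
    have "mat_pow n M m u w = mat_vec n (mat_pow n M m) (\<lambda>v. if v = w then 1 else 0) u"
      using \<open>w < n\<close> by (simp add: mat_vec_unit)
    also have "\<dots> = (\<Sum>j\<in>J. a j * mat_vec n (mat_pow n M m) (g j) u)"
      using unit by (rule mat_vec_lincomb)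
    also have "\<dots> = (\<Sum>j\<in>J. a j * (\<nu> j ^ m * g j u))"
      using eigen \<open>u < n\<close> by (intro sum.cong refl) (simp add: mat_vec_mat_pow_eigen)
    finally show ?thesis
      by (simp add: mult_ac)
  qed
  have "(\<lambda>m. \<Sum>j\<in>J. a j * g j u * (\<nu> j ^ m /\<^sub>R fact m)) sums (\<Sum>j\<in>J. a j * g j u * exp (\<nu> j))"
    by (intro sums_sum sums_mult exp_converges)
  hence "(\<lambda>m. mat_pow n M m u w / of_nat (fact m)) sums (\<Sum>j\<in>J. a j * g j u * exp (\<nu> j))"
    by (simp add: pow scaleR_conv_of_real divide_inverse sum_distrib_left mult_ac)
  thus ?thesis
    by (simp add: mat_exp_def sums_iff mult_ac)
qed

section \<open>Adding an edge between twin vertices\<close>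

lemma mat_vec_laplacian:
  "u < n \<Longrightarrow> mat_vec n (laplacian n A) z u = (\<Sum>w<n. A u w) * z u - mat_vec n A z u"
  unfolding mat_vec_def laplacian_def
  by (simp add: left_diff_distrib sum_subtractf if_distrib[where f = "\<lambda>a. a * _"] cong: if_cong)

lemma mat_vec_add_edge:
  assumes "x \<noteq> y" "x < n" "y < n"
  shows "mat_vec n (add_edge A x y) z u
    = mat_vec n A z u + (if u = x then z y else 0) + (if u = y then z x else 0)"
  using assms
  by (simp add: mat_vec_def add_edge_def distrib_right sum.distrib if_distrib[where f = "\<lambda>a. a * _"] cong: if_cong)

lemma mat_vec_laplacian_add_edge:
  assumes "x \<noteq> y" "x < n" "y < n" "u < n"
  shows "mat_vec n (laplacian n (add_edge A x y)) z u
    = mat_vec n (laplacian n A) z u + ((if u = x then 1 else 0) - (if u = y then 1 else 0)) * (z x - z y)"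
proof -
  have "(\<Sum>w<n. add_edge A x y u w) = (\<Sum>w<n. A u w) + (if u = x then 1 else 0) + (if u = y then 1 else 0)"
    using mat_vec_add_edge[OF assms(1-3), of A "\<lambda>_. 1" u] by (simp add: mat_vec_def)
  thus ?thesis
    using assms by (simp add: mat_vec_laplacian mat_vec_add_edge algebra_simps)
qed

lemma laplacian_add_twin_edge_eigen:
  assumes xy: "x \<noteq> y" "x < n" "y < n"
    and rows: "\<And>w. w < n \<Longrightarrow> A x w = A y w" and cols: "\<And>u. u < n \<Longrightarrow> A u x = A u y"
    and deg: "\<And>u. u < n \<Longrightarrow> (\<Sum>w<n. A u w) = D"
    and "u < n"
  defines "v \<equiv> \<lambda>u. (if u = x then 1 else 0) - (if u = y then 1 else 0)"
  shows "mat_vec n (laplacian n (add_edge A x y)) v u = (D + 2) * v u"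
    and "(\<And>u. u < n \<Longrightarrow> mat_vec n A f u = \<mu> * f u) \<Longrightarrow>
      mat_vec n (laplacian n (add_edge A x y)) (\<lambda>u. f u - (f x - f y) / 2 * v u) u
        = (D - \<mu>) * (f u - (f x - f y) / 2 * v u)"
proof -
  have L': "mat_vec n (laplacian n (add_edge A x y)) z u = D * z u - mat_vec n A z u + v u * (z x - z y)" for z
    using \<open>u < n\<close> by (subst mat_vec_laplacian_add_edge[OF xy \<open>u < n\<close>]) (simp add: mat_vec_laplacian deg v_def)
  have "mat_vec n A v u = mat_vec n A (\<lambda>w. if w = x then 1 else 0) u - mat_vec n A (\<lambda>w. if w = y then 1 else 0) u"
    by (simp add: mat_vec_def v_def right_diff_distrib sum_subtractf)
  hence Av: "mat_vec n A v u = 0"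
    using xy cols[OF \<open>u < n\<close>] by (simp add: mat_vec_unit)
  have v_xy: "v x = 1" "v y = -1"
    using xy by (simp_all add: v_def)
  show "mat_vec n (laplacian n (add_edge A x y)) v u = (D + 2) * v u"
    by (simp add: L' Av v_xy algebra_simps)
  assume eigen: "\<And>u. u < n \<Longrightarrow> mat_vec n A f u = \<mu> * f u"
  \<comment> \<open>Equal rows give \<mu> (f x - f y) = 0, so removing the component along v keeps f an eigenvector.\<close>
  have "mat_vec n A f x = mat_vec n A f y"
    using rows by (simp add: mat_vec_def)
  hence "\<mu> = 0 \<or> f x = f y"
    using eigen xy by simp
  moreover have "mat_vec n A (\<lambda>u. f u - (f x - f y) / 2 * v u) u
      = mat_vec n A f u - (f x - f y) / 2 * mat_vec n A v u"
    by (simp add: mat_vec_def right_diff_distrib sum_subtractf sum_distrib_left mult_ac)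
  ultimately show "mat_vec n (laplacian n (add_edge A x y)) (\<lambda>u. f u - (f x - f y) / 2 * v u) u
      = (D - \<mu>) * (f u - (f x - f y) / 2 * v u)"
    using eigen[OF \<open>u < n\<close>] by (auto simp: L' Av v_xy field_simps)
qed

lemma mat_vec_scale: "mat_vec n (\<lambda>u v. c * M u v) z u = c * mat_vec n M z u"
  by (simp add: mat_vec_def sum_distrib_left mult.assoc)

lemma U_L_add_twin_edge:
  fixes f :: "'j \<Rightarrow> nat \<Rightarrow> complex" and \<tau> :: real
  assumes xy: "x \<noteq> y" "x < n" "y < n"
    and rows: "\<And>w. w < n \<Longrightarrow> A x w = A y w" and cols: "\<And>u. u < n \<Longrightarrow> A u x = A u y"
    and deg: "\<And>u. u < n \<Longrightarrow> (\<Sum>w<n. A u w) = D"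
    and "finite J" and eigen: "\<And>j u. j \<in> J \<Longrightarrow> u < n \<Longrightarrow> mat_vec n A (f j) u = \<mu> j * f j u"
    and unit: "\<And>u w. u < n \<Longrightarrow> w < n \<Longrightarrow> (if u = w then 1 else 0) = (\<Sum>j\<in>J. a w j * f j u)"
    and exp_eigen: "\<And>j. j \<in> J \<Longrightarrow> exp (- (\<i> * of_real \<tau>) * (D - \<mu> j)) = 1"
    and exp_twin: "exp (- (\<i> * of_real \<tau>) * (D + 2)) = -1"
    and "u < n" "w < n"
  shows "U_L n (add_edge A x y) \<tau> u w = (if u = w then 1 else 0)
    - ((if w = x then 1 else 0) - (if w = y then 1 else 0)) * ((if u = x then 1 else 0) - (if u = y then 1 else 0))"
proof -
  define c where "c = - (\<i> * of_real \<tau>)"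
  define v where "v = (\<lambda>u. (if u = x then 1 else 0) - (if u = y then 1 else (0::complex)))"
  define d where "d z = (z x - z y) / 2" for z :: "nat \<Rightarrow> complex"
  define e where "e u = (if u = w then 1 else (0::complex))" for u
  define g where "g i = (case i of Inl j \<Rightarrow> (\<lambda>u. f j u - d (f j) * v u) | Inr _ \<Rightarrow> v)" for i :: "'j + unit"
  define \<nu> where "\<nu> i = (case i of Inl j \<Rightarrow> c * (D - \<mu> j) | Inr _ \<Rightarrow> c * (D + 2))" for i :: "'j + unit"
  define b where "b i = (case i of Inl j \<Rightarrow> a w j | Inr _ \<Rightarrow> d e)" for i :: "'j + unit"
  define M where "M = (\<lambda>u v. c * laplacian n (add_edge A x y) u v)"
  have "mat_vec n M v u' = c * (D + 2) * v u'" if "u' < n" for u'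
    using laplacian_add_twin_edge_eigen(1)[OF xy rows cols deg that]
    by (simp add: M_def mat_vec_scale v_def)
  moreover have "mat_vec n M (\<lambda>u. f j u - d (f j) * v u) u' = c * (D - \<mu> j) * (f j u' - d (f j) * v u')"
    if "j \<in> J" "u' < n" for j u'
    using laplacian_add_twin_edge_eigen(2)[OF xy rows cols deg \<open>u' < n\<close>, of "f j" "\<mu> j"] eigen[OF \<open>j \<in> J\<close>]
    by (simp add: M_def mat_vec_scale v_def d_def)
  ultimately have eig: "mat_vec n M (g i) u' = \<nu> i * g i u'" if "i \<in> J <+> {()}" "u' < n" for i u'
    using that by (auto simp: g_def \<nu>_def)
  have "(\<Sum>j\<in>J. a w j * d (f j)) = ((\<Sum>j\<in>J. a w j * f j x) - (\<Sum>j\<in>J. a w j * f j y)) / 2"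
    by (simp add: d_def right_diff_distrib sum_subtractf flip: sum_divide_distrib)
  also have "\<dots> = d e"
    using unit[OF _ \<open>w < n\<close>] xy by (simp add: d_def e_def)
  finally have "(\<Sum>j\<in>J. a w j * d (f j)) = d e" .
  hence e_expansion: "e u' = (\<Sum>i\<in>J <+> {()}. b i * g i u')" if "u' < n" for u'
    using unit[OF that \<open>w < n\<close>] \<open>finite J\<close>
    by (simp add: e_def b_def g_def sum.Plus right_diff_distrib sum_subtractf mult.assoc[symmetric] flip: sum_distrib_right)
  have "U_L n (add_edge A x y) \<tau> u w = (\<Sum>i\<in>J <+> {()}. b i * exp (\<nu> i) * g i u)"
    unfolding U_L_def c_def[symmetric] M_def[symmetric]
    by (rule mat_exp_eigen_expansion[where g = g]) (use \<open>finite J\<close> eig e_expansion \<open>u < n\<close> \<open>w < n\<close> in \<open>auto simp: e_def\<close>)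
  also have "\<dots> = (\<Sum>i\<in>J <+> {()}. b i * g i u) - 2 * d e * v u"
    using exp_eigen exp_twin \<open>finite J\<close> by (simp add: sum.Plus b_def \<nu>_def g_def c_def)
  finally show ?thesis
    using e_expansion[OF \<open>u < n\<close>] by (simp add: e_def d_def v_def)
qed

section \<open>Circulant graphs\<close>

lemma int_add_diff_mod:
  assumes "b \<le> n"
  shows "int ((a + n - b) mod n) = (int a - int b) mod int n"
proof -
  have "int ((a + n - b) mod n) = (int a - int b + int n) mod int n"
    using assms by (simp add: zmod_int of_nat_diff algebra_simps)
  thus ?thesis
    by simp
qed

lemma conn_set_subset:
  assumes "conn_set n S"
  shows "S \<subseteq> {1..<n}"
proof
  fix s assume "s \<in> S"
  with assms show "s \<in> {1..<n}"
    by (cases s) (auto simp: conn_set_def)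
qed

lemma conn_set_neg_mem:
  assumes "conn_set n S" "s \<in> S"
  shows "n - s \<in> S"
proof -
  have "(n - s) mod n \<in> S" "0 < s" "s < n"
    using assms conn_set_subset[OF assms(1)] by (auto simp: conn_set_def)
  thus ?thesis
    by simp
qed

lemma half_shift_neq:
  fixes n h x :: nat
  assumes "n = 2 * h" "x < n"
  shows "(x + h) mod n \<noteq> x"
proof (cases "x + h < n")
  case False
  hence "(x + h) mod n = x + h - n"
    using assms by (simp add: le_mod_geq)
  thus ?thesis
    using assms False by simp
qed (use assms in simp)

lemma half_shift_mem_iff:
  assumes S: "conn_set n S" "S = half_minus n S" and n: "n = 2 * h" and "s < n"
  shows "(s + h) mod n \<in> S \<longleftrightarrow> s \<in> S"
proof -
  have shift: "(t + h) mod n \<in> S" if "t \<in> S" for t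
  proof -
    have "(n div 2 + n - (n - t)) mod n \<in> S"
      using S(2) conn_set_neg_mem[OF S(1) that] by (auto simp: half_minus_def)
    moreover have "t \<le> n"
      using conn_set_subset[OF S(1)] that by auto
    ultimately show ?thesis
      using n by (simp add: add.commute)
  qed
  have "((s + h) mod n + h) mod n = s"
    using \<open>s < n\<close> n by (auto simp: mod_add_left_eq mod_if)
  thus ?thesis
    using shift[of s] shift[of "(s + h) mod n"] by auto
qed

lemma cay_adj_half_shift:
  assumes S: "conn_set n S" "S = half_minus n S" and n: "n = 2 * h" and "u < n" "x < n"
  shows "cay_adj n S ((x + h) mod n) u \<longleftrightarrow> cay_adj n S x u"
    and "cay_adj n S u ((x + h) mod n) \<longleftrightarrow> cay_adj n S u x"
proof -
  have "int (((x + h) mod n + n - u) mod n) = (int x + int h - int u) mod int n"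
    using \<open>u < n\<close> by (subst int_add_diff_mod) (simp_all add: zmod_int mod_simps)
  moreover have "int (((x + n - u) mod n + h) mod n) = (int x + int h - int u) mod int n"
  proof -
    have "int (((x + n - u) mod n + h) mod n) = (int x + int h - int u + int n) mod int n"
      using \<open>u < n\<close> by (simp add: zmod_int of_nat_diff mod_simps algebra_simps)
    thus ?thesis
      by simp
  qed
  moreover have "int ((u + n - (x + h) mod n) mod n) = (int u - int x - int h) mod int n"
    using \<open>x < n\<close> by (subst int_add_diff_mod) (simp_all add: zmod_int mod_simps algebra_simps)
  moreover have "int (((u + n - x) mod n + h) mod n) = (int u - int x - int h) mod int n"
  proof -
    have "int (((u + n - x) mod n + h) mod n) = (int u + int n - int x + int h) mod int n"
      using \<open>x < n\<close> by (simp add: zmod_int of_nat_diff mod_simps algebra_simps)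
    also have "int u + int n - int x + int h = (int u - int x - int h) + int n * 2"
      using n by simp
    finally show ?thesis
      by simp
  qed
  ultimately have "((x + h) mod n + n - u) mod n = ((x + n - u) mod n + h) mod n"
    and "(u + n - (x + h) mod n) mod n = ((u + n - x) mod n + h) mod n"
    by simp_all
  thus "cay_adj n S ((x + h) mod n) u \<longleftrightarrow> cay_adj n S x u"
    and "cay_adj n S u ((x + h) mod n) \<longleftrightarrow> cay_adj n S u x"
    using \<open>x < n\<close> by (simp_all add: cay_adj_def half_shift_mem_iff[OF S n])
qed

lemma cay_adj_irrefl: "conn_set n S \<Longrightarrow> \<not> cay_adj n S v v"
  by (simp add: cay_adj_def conn_set_def)

lemma cay_twins_half_shift:
  assumes S: "conn_set n S" "S = half_minus n S" and n: "n = 2 * h" and "x < n"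
  shows "twins n (cay_adj n S) x ((x + h) mod n)"
proof -
  define y where "y = (x + h) mod n"
  have row: "cay_adj n S y w \<longleftrightarrow> cay_adj n S x w" if "w < n" for w
    unfolding y_def using that by (rule cay_adj_half_shift(1)[OF S n _ \<open>x < n\<close>])
  have "y < n"
    using n \<open>x < n\<close> by (simp add: y_def)
  hence "\<not> cay_adj n S x y" "\<not> cay_adj n S y x"
    using row \<open>x < n\<close> cay_adj_irrefl[OF S(1)] by blast+
  hence "{w. w < n \<and> cay_adj n S x w} - {y} = {w. w < n \<and> cay_adj n S y w} - {x}"
    using row by auto
  thus ?thesis
    using half_shift_neq[OF n \<open>x < n\<close>] by (simp add: twins_def y_def)
qed

lemma add_diff_mod_involution:
  fixes n u w :: nat
  assumes "n > 0" "w < n"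
  shows "(u + n - (u + n - w) mod n) mod n = w"
proof -
  have "int ((u + n - (u + n - w) mod n) mod n) = (int u - (int u - int w) mod int n) mod int n"
    using assms by (simp add: int_add_diff_mod)
  also have "\<dots> = (int u - (int u - int w)) mod int n"
    by (rule mod_diff_right_eq)
  also have "\<dots> = int w"
    using assms by simp
  finally show ?thesis
    by simp
qed

lemma cay_adjmat_character_eigen:
  fixes z :: complex
  assumes S: "conn_set n S" and "n > 0" and z: "z ^ n = 1"
  shows "mat_vec n (cay_adjmat n S) (\<lambda>w. z ^ w) u = (\<Sum>s\<in>S. z ^ s) * z ^ u"
proof -
  have S_sub: "S \<subseteq> {..<n}"
    using conn_set_subset[OF S] by auto
  have z_pow_mod: "z ^ a = z ^ (a mod n)" for a
  proof -
    have "z ^ a = (z ^ n) ^ (a div n) * z ^ (a mod n)"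
      by (subst mult_div_mod_eq[of n a, symmetric]) (simp only: power_add power_mult)
    thus ?thesis
      using z by simp
  qed
  have "mat_vec n (cay_adjmat n S) (\<lambda>w. z ^ w) u = (\<Sum>w<n. if (u + n - w) mod n \<in> S then z ^ w else 0)"
    by (simp add: mat_vec_def cay_adjmat_def cay_adj_def if_distrib[where f = "\<lambda>a. a * _"] cong: if_cong)
  also have "\<dots> = (\<Sum>s<n. if s \<in> S then z ^ ((u + n - s) mod n) else 0)"
    using \<open>n > 0\<close> add_diff_mod_involution[OF \<open>n > 0\<close>]
    by (intro sum.reindex_bij_witness[of _ "\<lambda>s. (u + n - s) mod n" "\<lambda>s. (u + n - s) mod n"]) auto
  also have "\<dots> = (\<Sum>s\<in>{s\<in>{..<n}. s \<in> S}. z ^ ((u + n - s) mod n))"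
    by (rule sum.inter_filter[symmetric]) simp
  also have "\<dots> = (\<Sum>s\<in>S. z ^ u * z ^ (n - s))"
  proof -
    have "{s\<in>{..<n}. s \<in> S} = S"
      using S_sub by auto
    moreover have "z ^ ((u + n - s) mod n) = z ^ u * z ^ (n - s)" if "s \<in> S" for s
      using that S_sub by (auto simp flip: z_pow_mod power_add)
    ultimately show ?thesis
      by simp
  qed
  also have "\<dots> = z ^ u * (\<Sum>s\<in>S. z ^ (n - s))"
    by (simp add: sum_distrib_left)
  also have "(\<Sum>s\<in>S. z ^ (n - s)) = (\<Sum>s\<in>S. z ^ s)"
    using conn_set_neg_mem[OF S] S_sub
    by (intro sum.reindex_bij_witness[of _ "\<lambda>s. n - s" "\<lambda>s. n - s"]) auto
  finally show ?thesis
    by (simp add: mult.commute)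
qed

lemma cis_2pi_div_pow_eq_1_iff:
  fixes n t :: nat
  assumes "n > 0"
  shows "cis (2 * pi / n) ^ t = 1 \<longleftrightarrow> n dvd t"
proof
  assume "cis (2 * pi / n) ^ t = 1"
  hence "cos (real t * (2 * pi) / n) = 1"
    by (simp add: DeMoivre complex_eq_iff)
  then obtain q :: int where "real t * (2 * pi) / n = real_of_int q * 2 * pi"
    by (auto simp: cos_one_2pi_int)
  hence "real t = real_of_int (q * int n)"
    using assms by (simp add: field_simps)
  hence "int t = q * int n"
    by linarith
  thus "n dvd t"
    by (metis dvd_triv_right int_dvd_int_iff)
next
  assume "n dvd t"
  then obtain q where "t = n * q" ..
  hence "cis (2 * pi / n) ^ t = cis (2 * pi * real q)"
    using assms by (simp add: DeMoivre mult_ac)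
  thus "cis (2 * pi / n) ^ t = 1"
    by simp
qed

lemma fourier_inversion:
  fixes n u w :: nat
  defines "\<omega> \<equiv> cis (2 * pi / n)"
  assumes "n > 0" "u < n" "w < n"
  shows "(if u = w then 1 else 0) = (\<Sum>j<n. (\<omega> ^ j) ^ (n - w) / n * (\<omega> ^ j) ^ u)"
proof -
  define t where "t = n - w + u"
  have "n dvd t \<longleftrightarrow> u = w"
  proof
    assume "n dvd t"
    then obtain q where "t = n * q" ..
    moreover have "0 < t" "t < n * 2"
      using assms by (simp_all add: t_def)
    ultimately have "0 < q" "q < 2"
      by simp_all
    hence "q = 1"
      by simp
    thus "u = w"
      using \<open>t = n * q\<close> assms by (simp add: t_def)
  qed (use assms in \<open>simp add: t_def\<close>)
  have "(\<omega> ^ j) ^ (n - w) * (\<omega> ^ j) ^ u = (\<omega> ^ t) ^ j" for j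
  proof -
    have "(\<omega> ^ j) ^ (n - w) * (\<omega> ^ j) ^ u = (\<omega> ^ j) ^ t"
      by (simp add: t_def power_add)
    thus ?thesis
      by (metis power_mult mult.commute)
  qed
  hence "(\<Sum>j<n. (\<omega> ^ j) ^ (n - w) / n * (\<omega> ^ j) ^ u) = (\<Sum>j<n. (\<omega> ^ t) ^ j) / n"
    by (simp add: sum_divide_distrib)
  also have "(\<Sum>j<n. (\<omega> ^ t) ^ j) = (if u = w then n else 0)"
  proof (cases "u = w")
    case True
    hence "\<omega> ^ t = 1"
      using \<open>n dvd t \<longleftrightarrow> u = w\<close> \<open>n > 0\<close> by (simp add: \<omega>_def cis_2pi_div_pow_eq_1_iff)
    thus ?thesis
      using True by simp
  next
    case False
    hence "\<omega> ^ t \<noteq> 1"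
      using \<open>n dvd t \<longleftrightarrow> u = w\<close> \<open>n > 0\<close> by (simp add: \<omega>_def cis_2pi_div_pow_eq_1_iff)
    moreover have "(\<omega> ^ t) ^ n = 1"
      using \<open>n > 0\<close> by (simp add: \<omega>_def cis_2pi_div_pow_eq_1_iff flip: power_mult)
    ultimately show ?thesis
      using False by (simp add: geometric_sum)
  qed
  finally show ?thesis
    using \<open>n > 0\<close> by simp
qed

lemma cay_character_sum_Ints:
  fixes z :: complex
  assumes S: "conn_set n S" and "n > 0" and integral: "integral_graph n (cay_adjmat n S)"
    and z: "z ^ n = 1"
  shows "(\<Sum>s\<in>S. z ^ s) \<in> \<int>"
proof -
  have "is_eigenvalue n (cay_adjmat n S) (\<Sum>s\<in>S. z ^ s)"
    unfolding is_eigenvalue_def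
  proof (rule exI[of _ "\<lambda>w. z ^ w"], intro conjI allI impI)
    show "\<exists>w<n. z ^ w \<noteq> 0"
      using \<open>n > 0\<close> by (intro exI[of _ 0]) simp
    fix u
    show "(\<Sum>w<n. cay_adjmat n S u w * z ^ w) = (\<Sum>s\<in>S. z ^ s) * z ^ u"
      using cay_adjmat_character_eigen[OF S \<open>n > 0\<close> z] by (simp add: mat_vec_def)
  qed
  thus ?thesis
    using integral by (simp add: integral_graph_def)
qed

lemma gcd_pow2_eq_iff:
  fixes s :: nat
  assumes "a < k"
  shows "gcd s (2 ^ k) = 2 ^ a \<longleftrightarrow> 2 ^ a dvd s \<and> \<not> 2 ^ Suc a dvd s"
proof
  assume gcd: "gcd s (2 ^ k) = 2 ^ a"
  have "(2::nat) ^ Suc a dvd 2 ^ k"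
    using assms by (intro le_imp_power_dvd) simp
  have "\<not> 2 ^ Suc a dvd s"
  proof
    assume "2 ^ Suc a dvd s"
    hence "2 ^ Suc a dvd gcd s (2 ^ k)"
      using \<open>2 ^ Suc a dvd 2 ^ k\<close> by simp
    hence "(2::nat) ^ Suc a \<le> 2 ^ a"
      using gcd by (simp add: dvd_imp_le)
    thus False
      by simp
  qed
  thus "2 ^ a dvd s \<and> \<not> 2 ^ Suc a dvd s"
    using gcd by (metis gcd_dvd1)
next
  assume "2 ^ a dvd s \<and> \<not> 2 ^ Suc a dvd s"
  then obtain t where "s = 2 ^ a * t" "odd t"
    by (auto elim!: dvdE)
  moreover have "(2::nat) ^ k = 2 ^ a * 2 ^ (k - a)"
    using assms by (simp flip: power_add)
  moreover have "coprime t (2 ^ (k - a))"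
    using \<open>odd t\<close> by simp
  ultimately show "gcd s (2 ^ k) = 2 ^ a"
    by (simp add: gcd_mult_distrib_nat[symmetric])
qed

lemma card_multiples_pow2_mod_4:
  fixes S :: "nat set"
  assumes n: "n = 2 ^ k" and S: "S \<subseteq> {1..<n}"
    and classes: "\<forall>d. d dvd n \<and> d < n \<longrightarrow> card (S \<inter> S_n n d) mod 4 = 0"
    and "a \<le> k"
  shows "4 dvd card {s\<in>S. 2 ^ a dvd s}"
  using \<open>a \<le> k\<close>
proof (induction a rule: inc_induct)
  case base
  have "{s\<in>S. 2 ^ k dvd s} = {}"
    using S n by (auto simp: nat_dvd_not_less)
  thus ?case
    by (metis card.empty dvd_0_right)
next
  case (step a)
  have "finite S"
    using S finite_subset by blast
  have "2 ^ a dvd s" if "2 ^ Suc a dvd s" for s :: nat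
    using that by (simp add: dvd_mult_right)
  hence "{s\<in>S. 2 ^ a dvd s} = {s\<in>S. 2 ^ Suc a dvd s} \<union> (S \<inter> S_n n (2 ^ a))"
    using S n gcd_pow2_eq_iff[OF step.hyps(2)] by (auto simp: S_n_def simp del: power_Suc)
  moreover have "{s\<in>S. 2 ^ Suc a dvd s} \<inter> (S \<inter> S_n n (2 ^ a)) = {}"
    using gcd_pow2_eq_iff[OF step.hyps(2)] n by (auto simp: S_n_def)
  ultimately have "card {s\<in>S. 2 ^ a dvd s} = card {s\<in>S. 2 ^ Suc a dvd s} + card (S \<inter> S_n n (2 ^ a))"
    using \<open>finite S\<close> by (simp add: card_Un_disjoint)
  moreover have "card (S \<inter> S_n n (2 ^ a)) mod 4 = 0"
    using classes n step.hyps(2) by (simp add: le_imp_power_dvd)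
  ultimately show ?case
    using step.IH by presburger
qed

lemma cay_eigenvalue_mod_4:
  fixes z :: complex
  assumes n: "n = 2 ^ k" and S: "conn_set n S" and integral: "integral_graph n (cay_adjmat n S)"
    and classes: "\<forall>d. d dvd n \<and> d < n \<longrightarrow> card (S \<inter> S_n n d) mod 4 = 0"
    and z: "z ^ n = 1"
  shows "\<exists>q. (\<Sum>s\<in>S. z ^ s) = of_int (4 * q)"
proof -
  have "S \<subseteq> {1..<n}"
    using S by (rule conn_set_subset)
  hence "finite S"
    using finite_subset by blast
  have mult4: "(4::int) dvd int (card {s\<in>S. 2 ^ a dvd s})" if "a \<le> k" for a
  proof -
    have "int 4 dvd int (card {s\<in>S. 2 ^ a dvd s})"
      using card_multiples_pow2_mod_4[OF n \<open>S \<subseteq> {1..<n}\<close> classes that] by (simp only: int_dvd_int_iff)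
    thus ?thesis
      by simp
  qed
  have "(\<Sum>s\<in>S. z ^ s) \<in> \<int>"
    using n by (intro cay_character_sum_Ints[OF S _ integral z]) simp
  then obtain L where L: "(\<Sum>s\<in>S. z ^ s) = of_int L"
    by (rule Ints_cases)
  have "4 dvd L"
  proof (cases "z = 1")
    case True
    hence "(of_int L :: complex) = of_int (int (card S))"
      using L by simp
    hence "L = int (card S)"
      by (simp only: of_int_eq_iff)
    thus ?thesis
      using mult4[of 0] by simp
  next
    case False
    then obtain b where "b < k" "z ^ 2 ^ b = -1"
      using exists_pow2_eq_minus_1[of z k] z n by blast
    hence "L = 2 * int (card {s\<in>S. 2 ^ Suc b dvd s}) - int (card {s\<in>S. 2 ^ b dvd s})"
      using sum_powers_of_root_eq_int[of z b S L] \<open>finite S\<close> L by blast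
    thus ?thesis
      using mult4[of b] mult4[of "Suc b"] \<open>b < k\<close> by (simp add: dvd_diff)
  qed
  then obtain q where "L = 4 * q" ..
  thus ?thesis
    using L by blast
qed

lemma exp_minus_i_half_pi_mult_4: "exp (- (\<i> * of_real (pi / 2)) * of_int (4 * q)) = 1"
proof -
  have "- (\<i> * of_real (pi / 2)) * of_int (4 * q) = \<i> * of_real (2 * pi * of_int (- q))"
    by (simp add: algebra_simps)
  hence "exp (- (\<i> * of_real (pi / 2)) * of_int (4 * q)) = cis (2 * pi * of_int (- q))"
    by (simp only: cis_conv_exp)
  thus ?thesis
    using cis_multiple_2pi[of "real_of_int (- q)"] by simp
qed

lemma exp_minus_i_half_pi_mult_4_plus_2: "exp (- (\<i> * of_real (pi / 2)) * (of_int (4 * q) + 2)) = -1"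
proof -
  have "exp (- (\<i> * of_real (pi / 2)) * (of_int (4 * q) + 2))
      = exp (- (\<i> * of_real (pi / 2)) * of_int (4 * q)) * exp (\<i> * of_real (- pi))"
    by (simp add: algebra_simps flip: exp_add)
  also have "exp (\<i> * of_real (- pi)) = cis (- pi)"
    by (rule cis_conv_exp[symmetric])
  also have "cis (- pi) = -1"
    by (simp add: complex_eq_iff)
  finally show ?thesis
    by (simp only: exp_minus_i_half_pi_mult_4) simp
qed

lemma U_L_cay_add_half_edge:
  fixes k n :: nat and S :: "nat set"
  assumes n: "n = 2 ^ k" "k \<ge> 1" and S: "conn_set n S" "S = half_minus n S"
    and integral: "integral_graph n (cay_adjmat n S)"
    and classes: "\<forall>d. d dvd n \<and> d < n \<longrightarrow> card (S \<inter> S_n n d) mod 4 = 0"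
    and "x < n" "u < n" "w < n"
  defines "y \<equiv> (x + n div 2) mod n"
  shows "U_L n (add_edge (cay_adjmat n S) x y) (pi / 2) u w = (if u = w then 1 else 0)
    - ((if w = x then 1 else 0) - (if w = y then 1 else 0)) * ((if u = x then 1 else 0) - (if u = y then 1 else 0))"
proof -
  define h where "h = n div 2"
  have n2: "n = 2 * h"
    using n by (cases k) (simp_all add: h_def)
  have "n > 0"
    using n by simp
  define \<omega> where "\<omega> = cis (2 * pi / n)"
  have root: "(\<omega> ^ j) ^ n = 1" for j
    using \<open>n > 0\<close> by (simp add: \<omega>_def cis_2pi_div_pow_eq_1_iff flip: power_mult)
  have deg: "(\<Sum>w<n. cay_adjmat n S u' w) = of_nat (card S)" for u'
    using cay_adjmat_character_eigen[OF S(1) \<open>n > 0\<close>, of 1] by (simp add: mat_vec_def)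
  have "4 dvd card {s\<in>S. 2 ^ 0 dvd s}"
    using card_multiples_pow2_mod_4[OF n(1) conn_set_subset[OF S(1)] classes] by blast
  then obtain c where c: "card S = 4 * c"
    by auto
  show ?thesis
    unfolding y_def h_def[symmetric]
  proof (rule U_L_add_twin_edge[where f = "\<lambda>j w. (\<omega> ^ j) ^ w" and J = "{..<n}"
        and \<mu> = "\<lambda>j. \<Sum>s\<in>S. (\<omega> ^ j) ^ s" and a = "\<lambda>w j. (\<omega> ^ j) ^ (n - w) / n"])
    show "x \<noteq> (x + h) mod n" "(x + h) mod n < n"
      using half_shift_neq[OF n2 \<open>x < n\<close>] n2 \<open>x < n\<close> by auto
    show "cay_adjmat n S x w' = cay_adjmat n S ((x + h) mod n) w'" if "w' < n" for w'
      using cay_adj_half_shift(1)[OF S n2 that \<open>x < n\<close>] by (simp add: cay_adjmat_def)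
    show "cay_adjmat n S u' x = cay_adjmat n S u' ((x + h) mod n)" if "u' < n" for u'
      using cay_adj_half_shift(2)[OF S n2 that \<open>x < n\<close>] by (simp add: cay_adjmat_def)
    show "mat_vec n (cay_adjmat n S) (\<lambda>w. (\<omega> ^ j) ^ w) u' = (\<Sum>s\<in>S. (\<omega> ^ j) ^ s) * (\<omega> ^ j) ^ u'" for j u'
      using cay_adjmat_character_eigen[OF S(1) \<open>n > 0\<close> root] .
    show "(if u' = w' then 1 else 0) = (\<Sum>j<n. (\<omega> ^ j) ^ (n - w') / n * (\<omega> ^ j) ^ u')"
      if "u' < n" "w' < n" for u' w'
      using fourier_inversion[OF \<open>n > 0\<close> that] by (simp add: \<omega>_def)
    show "exp (- (\<i> * of_real (pi / 2)) * (of_nat (card S) - (\<Sum>s\<in>S. (\<omega> ^ j) ^ s))) = 1" for j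
    proof -
      obtain q where "(\<Sum>s\<in>S. (\<omega> ^ j) ^ s) = of_int (4 * q)"
        using cay_eigenvalue_mod_4[OF n(1) S(1) integral classes root] ..
      hence "of_nat (card S) - (\<Sum>s\<in>S. (\<omega> ^ j) ^ s) = of_int (4 * (int c - q))"
        using c by simp
      thus ?thesis
        by (simp only: exp_minus_i_half_pi_mult_4)
    qed
    have "of_nat (card S) + 2 = (of_int (4 * int c) + 2 :: complex)"
      using c by simp
    thus "exp (- (\<i> * of_real (pi / 2)) * (of_nat (card S) + 2)) = -1"
      by (simp only: exp_minus_i_half_pi_mult_4_plus_2)
  qed (use \<open>x < n\<close> \<open>u < n\<close> \<open>w < n\<close> deg in simp_all)
qed

theorem corollary3p5:
  fixes k n :: nat and S :: "nat set" and x :: nat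
  assumes "k \<ge> 1" and "n = 2 ^ k"
    and "conn_set n S"
    and "integral_graph n (cay_adjmat n S)"
    and "S = half_minus n S"
    and "\<forall>d. d dvd n \<and> d < n \<longrightarrow> card (S \<inter> S_n n d) mod 4 = 0"
    and "x < n"
  shows "twins n (cay_adj n S) x ((x + n div 2) mod n)
    \<and> lap_PST n (add_edge (cay_adjmat n S) x ((x + n div 2) mod n)) x ((x + n div 2) mod n) (pi / 2)
    \<and> (\<forall>w<n. w \<noteq> x \<and> w \<noteq> (x + n div 2) mod n \<longrightarrow>
         lap_periodic n (add_edge (cay_adjmat n S) x ((x + n div 2) mod n)) w (pi / 2))"
proof -
  define y where "y = (x + n div 2) mod n"
  have n2: "n = 2 * (n div 2)"
    using assms(1,2) by (cases k) simp_all
  have "y < n" "x \<noteq> y"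
    using half_shift_neq[OF n2 assms(7)] n2 assms(7) by (auto simp: y_def)
  have U: "U_L n (add_edge (cay_adjmat n S) x y) (pi / 2) u w = (if u = w then 1 else 0)
      - ((if w = x then 1 else 0) - (if w = y then 1 else 0)) * ((if u = x then 1 else 0) - (if u = y then 1 else 0))"
    if "u < n" "w < n" for u w
    using U_L_cay_add_half_edge[OF assms(2,1,3,5,4,6,7) that] by (simp add: y_def)
  have "twins n (cay_adj n S) x y"
    unfolding y_def using cay_twins_half_shift[OF assms(3,5) n2 assms(7)] .
  moreover have "lap_PST n (add_edge (cay_adjmat n S) x y) x y (pi / 2)"
    unfolding lap_PST_def using U \<open>y < n\<close> \<open>x \<noteq> y\<close> assms(7) by (intro conjI exI[of _ 1]) auto
  moreover have "lap_periodic n (add_edge (cay_adjmat n S) x y) w (pi / 2)" if "w < n" "w \<noteq> x" "w \<noteq> y" for w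
    unfolding lap_periodic_def using U that by (intro conjI exI[of _ 1]) auto
  ultimately show ?thesis
    unfolding y_def by blast
qed

end
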